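(* Let $\Bbbk$ be a field, $\mathrm{Var}$ a variety of $\Bbbk$-algebras with one binary product defined by polylinear identities, $X$ a set, $\dot X$ a disjoint copy of $X$, $F=\mathrm{Var}\langle X\cup\dot X\rangle$, and $\varphi:F\to F$ the algebra homomorphism with $\varphi(x)=\varphi(\dot x)=x$ ($x\in X$). (1) Let $V\subseteq F$ be the span of all monomials of positive degree in $\dot X$, identified with $\text{tri-}\mathrm{Var}\langle X\rangle$ (operations $f\vdash g=\varphi(f)g$, $f\dashv g=f\varphi(g)$, $f\perp g=fg$, $\dot x\leftrightarrow x$). Let $S\subseteq V$ and $I=(S\cup\varphi(S))$ the ideal of $F$ generated by $S\cup\varphi(S)$. Then $I$ is $\varphi$-invariant, so $\varphi$ induces an endomorphism $\bar\varphi$ of $F/I$, and $F/I$ becomes a tri-algebra $(F/I)^{(3)}$ via $a\vdash b=\bar\varphi(a)b$, $a\dashv b=a\bar\varphi(b)$, $a\perp b=ab$; the tri-algebra $\text{tri-}\mathrm{Var}\langle X\mid S\rangle$ is isomorphic to the subalgebra of $(F/I)^{(3)}$ generated by the image of $\dot X$. (2) Similarly, let $V_2\subseteq F$ be the span of monomials of degree exactly $1$ in $\dot X$, identified with $\text{di-}\mathrm{Var}\langle X\rangle$ (operations $f\vdash g=\varphi(f)g$, $f\dashv g=f\varphi(g)$, $\dot x\leftrightarrow x$). For $S\subseteq V_2$ and $I=(S\cup\varphi(S))$, the di-algebra $\text{di-}\mathrm{Var}\langle X\mid S\rangle$ is isomorphic to the subalgebra of $F/I$ with operations $a\vdash b=\bar\varphi(a)b$,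 $a\dashv b=a\bar\varphi(b)$ generated by the image of $\dot X$.
   Context: Replication: for a polylinear $\Phi(x_1,\dots,x_n)$ in the free algebra with one binary operation $\mu$ and nonempty $H\subseteq\{1,\dots,n\}$, $\Phi_H$ is obtained by viewing each monomial as a binary tree, marking leaves $x_i$, $i\in H$, and replacing $\mu$ at each node by $\mu_S$, $S\subseteq\{1,2\}$ the set of branches containing a marked leaf (by $\mu_{\{1\}}$ if $S=\varnothing$). Write $\dashv=\mu_{\{1\}}$, $\vdash=\mu_{\{2\}}$, $\perp=\mu_{\{1,2\}}$. $\text{tri-}\mathrm{Var}$ is the variety of algebras with operations $\vdash,\dashv,\perp$ satisfying $(a* b)\vdash c=(a\star b)\vdash c$, $a\dashv(b* c)=a\dashv(b\star c)$ for all $*,\star\in\{\vdash,\dashv,\perp\}$, and $\Phi_H=0$ for every defining identity $\Phi$ of $\mathrm{Var}$ and nonempty $H$. $\text{di-}\mathrm{Var}$ is the variety of algebras with operations $\vdash,\dashv$ satisfying $(a\dashv b)\vdash c=(a\vdash b)\vdash c$, $a\dashv(b\vdash c)=a\dashv(b\dashv c)$, and $\Phi_{\{i\}}=0$ for every defining identity $\Phi$ of $\mathrm{Var}$ of degree $n$ and $1\le i\le n$. $\text{tri-}\mathrm{Var}\langle X\mid S\rangle$ (resp. $\text{di-}\mathrm{Var}\langle X\mid S\rangle$) denotes the quotient of the free tri- (resp. di-) algebra on $X$ by the ideal generated by $S$. The identifications of $V$ and $V_2$ with the free tri- and di-algebras on $X$ are established in the paper. *)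

theory Defs
  imports Main
begin

text \<open>Nonassociative monomials: binary trees with labelled leaves.\<close>
datatype 'a btree = Leaf 'a | Node "'a btree" "'a btree"

fun leaves :: "'a btree \<Rightarrow> 'a list" where
  "leaves (Leaf a) = [a]"
| "leaves (Node l r) = leaves l @ leaves r"

text \<open>Elements of the magma algebra k{Y}: finitely supported coefficient functions
  on monomials.  For generators Y = X \<union> dotX we use the labels Inl x (for x) and
  Inr x (for the dotted copy of x), x \<in> X.\<close>

definition Melt :: "'x set \<Rightarrow> (('x + 'x) btree \<Rightarrow> 'k::field) \<Rightarrow> bool" where
  "Melt X f \<longleftrightarrow> finite {t. f t \<noteq> 0} \<and>
     (\<forall>t. f t \<noteq> 0 \<longrightarrow> set_btree t \<subseteq> Inl ` X \<union> Inr ` X)"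

definition mzero :: "'a btree \<Rightarrow> 'k::field" where "mzero = (\<lambda>t. 0)"
definition madd :: "('a btree \<Rightarrow> 'k::field) \<Rightarrow> ('a btree \<Rightarrow> 'k) \<Rightarrow> ('a btree \<Rightarrow> 'k)" where
  "madd f g = (\<lambda>t. f t + g t)"
definition msub :: "('a btree \<Rightarrow> 'k::field) \<Rightarrow> ('a btree \<Rightarrow> 'k) \<Rightarrow> ('a btree \<Rightarrow> 'k)" where
  "msub f g = (\<lambda>t. f t - g t)"
definition msc :: "'k::field \<Rightarrow> ('a btree \<Rightarrow> 'k) \<Rightarrow> ('a btree \<Rightarrow> 'k)" where
  "msc c f = (\<lambda>t. c * f t)"
definition mmul :: "('a btree \<Rightarrow> 'k::field) \<Rightarrow> ('a btree \<Rightarrow> 'k) \<Rightarrow> ('a btree \<Rightarrow> 'k)" where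
  "mmul f g = (\<lambda>t. case t of Leaf _ \<Rightarrow> 0 | Node a b \<Rightarrow> f a * g b)"
definition mono :: "'a btree \<Rightarrow> ('a btree \<Rightarrow> 'k::field)" where
  "mono t = (\<lambda>s. if s = t then 1 else 0)"

text \<open>A (nonassociative) polynomial in variables x_1, x_2, ... (labelled by nat).\<close>
definition polylinear :: "(nat btree \<Rightarrow> 'k::field) \<Rightarrow> bool" where
  "polylinear \<Phi> \<longleftrightarrow> finite {t. \<Phi> t \<noteq> 0} \<and>
     (\<exists>n. \<forall>t. \<Phi> t \<noteq> 0 \<longrightarrow> distinct (leaves t) \<and> set (leaves t) = {1..n})"

fun eval_mono :: "(nat \<Rightarrow> ('a btree \<Rightarrow> 'k::field)) \<Rightarrow> nat btree \<Rightarrow> ('a btree \<Rightarrow> 'k)" where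
  "eval_mono u (Leaf i) = u i"
| "eval_mono u (Node a b) = mmul (eval_mono u a) (eval_mono u b)"

definition eval_poly :: "(nat btree \<Rightarrow> 'k::field) \<Rightarrow> (nat \<Rightarrow> ('a btree \<Rightarrow> 'k)) \<Rightarrow> ('a btree \<Rightarrow> 'k)" where
  "eval_poly \<Phi> u = (\<lambda>s. \<Sum>t\<in>{t. \<Phi> t \<noteq> 0}. \<Phi> t * eval_mono u t s)"

inductive_set ideal_gen :: "'x set \<Rightarrow> (('x + 'x) btree \<Rightarrow> 'k::field) set \<Rightarrow> (('x + 'x) btree \<Rightarrow> 'k) set"
  for X G where
  gen: "g \<in> G \<Longrightarrow> g \<in> ideal_gen X G"
| zero: "mzero \<in> ideal_gen X G"
| add: "a \<in> ideal_gen X G \<Longrightarrow> b \<in> ideal_gen X G \<Longrightarrow> madd a b \<in> ideal_gen X G"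
| smult: "a \<in> ideal_gen X G \<Longrightarrow> msc c a \<in> ideal_gen X G"
| mulr: "a \<in> ideal_gen X G \<Longrightarrow> Melt X m \<Longrightarrow> mmul a m \<in> ideal_gen X G"
| mull: "a \<in> ideal_gen X G \<Longrightarrow> Melt X m \<Longrightarrow> mmul m a \<in> ideal_gen X G"

text \<open>The verbal (T-)ideal of k{X \<union> dotX} of the variety defined by the identities Ids;
  Var<X \<union> dotX> = k{X \<union> dotX} / Tideal X Ids.\<close>
definition Tideal :: "'x set \<Rightarrow> (nat btree \<Rightarrow> 'k::field) set \<Rightarrow> (('x + 'x) btree \<Rightarrow> 'k) set" where
  "Tideal X Ids = ideal_gen X {eval_poly \<Phi> u | \<Phi> u. \<Phi> \<in> Ids \<and> (\<forall>i. Melt X (u i))}"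

inductive_set subalg_gen :: "('a btree \<Rightarrow> 'k::field) set \<Rightarrow> (('a btree \<Rightarrow> 'k) \<Rightarrow> ('a btree \<Rightarrow> 'k) \<Rightarrow> ('a btree \<Rightarrow> 'k)) list \<Rightarrow> ('a btree \<Rightarrow> 'k) set"
  for G ops where
  gen: "g \<in> G \<Longrightarrow> g \<in> subalg_gen G ops"
| zero: "mzero \<in> subalg_gen G ops"
| add: "a \<in> subalg_gen G ops \<Longrightarrow> b \<in> subalg_gen G ops \<Longrightarrow> madd a b \<in> subalg_gen G ops"
| smult: "a \<in> subalg_gen G ops \<Longrightarrow> msc c a \<in> subalg_gen G ops"
| op: "p \<in> set ops \<Longrightarrow> a \<in> subalg_gen G ops \<Longrightarrow> b \<in> subalg_gen G ops \<Longrightarrow> p a b \<in> subalg_gen G ops"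

abbreviation lin_span where "lin_span G \<equiv> subalg_gen G []"

inductive_set relideal_gen :: "('a btree \<Rightarrow> 'k::field) set \<Rightarrow> ('a btree \<Rightarrow> 'k) set \<Rightarrow> (('a btree \<Rightarrow> 'k) \<Rightarrow> ('a btree \<Rightarrow> 'k) \<Rightarrow> ('a btree \<Rightarrow> 'k)) list \<Rightarrow> ('a btree \<Rightarrow> 'k) set"
  for W G ops where
  gen: "g \<in> G \<Longrightarrow> g \<in> relideal_gen W G ops"
| zero: "mzero \<in> relideal_gen W G ops"
| add: "a \<in> relideal_gen W G ops \<Longrightarrow> b \<in> relideal_gen W G ops \<Longrightarrow> madd a b \<in> relideal_gen W G ops"
| smult: "a \<in> relideal_gen W G ops \<Longrightarrow> msc c a \<in> relideal_gen W G ops"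
| opr: "p \<in> set ops \<Longrightarrow> a \<in> relideal_gen W G ops \<Longrightarrow> w \<in> W \<Longrightarrow> p a w \<in> relideal_gen W G ops"
| opl: "p \<in> set ops \<Longrightarrow> a \<in> relideal_gen W G ops \<Longrightarrow> w \<in> W \<Longrightarrow> p w a \<in> relideal_gen W G ops"

text \<open>W1/K1 and W2/K2 (K_i a subspace/ideal of W_i) are isomorphic as algebras
  with the corresponding operations ops1 ! i, ops2 ! i, expressed through a lift
  h : W1 \<rightarrow> W2 of the isomorphism: h is linear and multiplicative modulo K2,
  induces a surjection onto W2/K2, and its kernel modulo K2 is exactly K1.\<close>
definition quot_iso ::
  "('a btree \<Rightarrow> 'k::field) set \<Rightarrow> ('a btree \<Rightarrow> 'k) set \<Rightarrow> (('a btree \<Rightarrow> 'k) \<Rightarrow> ('a btree \<Rightarrow> 'k) \<Rightarrow> ('a btree \<Rightarrow> 'k)) list \<Rightarrow>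
   ('b btree \<Rightarrow> 'k) set \<Rightarrow> ('b btree \<Rightarrow> 'k) set \<Rightarrow> (('b btree \<Rightarrow> 'k) \<Rightarrow> ('b btree \<Rightarrow> 'k) \<Rightarrow> ('b btree \<Rightarrow> 'k)) list \<Rightarrow> bool"
  where
  "quot_iso W1 K1 ops1 W2 K2 ops2 \<longleftrightarrow> length ops1 = length ops2 \<and>
    (\<exists>h. (\<forall>a\<in>W1. h a \<in> W2)
       \<and> (\<forall>a\<in>W1. \<forall>b\<in>W1. msub (h (madd a b)) (madd (h a) (h b)) \<in> K2)
       \<and> (\<forall>c. \<forall>a\<in>W1. msub (h (msc c a)) (msc c (h a)) \<in> K2)
       \<and> (\<forall>i<length ops1. \<forall>a\<in>W1. \<forall>b\<in>W1. msub (h ((ops1 ! i) a b)) ((ops2 ! i) (h a) (h b)) \<in> K2)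
       \<and> (\<forall>a\<in>W1. h a \<in> K2 \<longleftrightarrow> a \<in> K1)
       \<and> (\<forall>w\<in>W2. \<exists>a\<in>W1. msub w (h a) \<in> K2))"

definition collapse :: "('x + 'x) btree \<Rightarrow> ('x + 'x) btree" where
  "collapse = map_btree (\<lambda>y. Inl (case_sum id id y))"

definition phi :: "(('x + 'x) btree \<Rightarrow> 'k::field) \<Rightarrow> (('x + 'x) btree \<Rightarrow> 'k)" where
  "phi f = (\<lambda>s. \<Sum>t\<in>{t. f t \<noteq> 0 \<and> collapse t = s}. f t)"

definition opL :: "(('x + 'x) btree \<Rightarrow> 'k::field) \<Rightarrow> (('x + 'x) btree \<Rightarrow> 'k) \<Rightarrow> (('x + 'x) btree \<Rightarrow> 'k)" where
  "opL f g = mmul (phi f) g"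
definition opR :: "(('x + 'x) btree \<Rightarrow> 'k::field) \<Rightarrow> (('x + 'x) btree \<Rightarrow> 'k) \<Rightarrow> (('x + 'x) btree \<Rightarrow> 'k)" where
  "opR f g = mmul f (phi g)"

definition tri_ops :: "((('x + 'x) btree \<Rightarrow> 'k::field) \<Rightarrow> (('x + 'x) btree \<Rightarrow> 'k) \<Rightarrow> (('x + 'x) btree \<Rightarrow> 'k)) list" where
  "tri_ops = [opL, opR, mmul]"
definition di_ops :: "((('x + 'x) btree \<Rightarrow> 'k::field) \<Rightarrow> (('x + 'x) btree \<Rightarrow> 'k) \<Rightarrow> (('x + 'x) btree \<Rightarrow> 'k)) list" where
  "di_ops = [opL, opR]"

definition dot_deg :: "('x + 'x) btree \<Rightarrow> nat" where
  "dot_deg t = length (filter (\<lambda>y. case y of Inl _ \<Rightarrow> False | Inr _ \<Rightarrow> True) (leaves t))"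

definition monoms :: "'x set \<Rightarrow> ('x + 'x) btree set" where
  "monoms X = {t. set_btree t \<subseteq> Inl ` X \<union> Inr ` X}"

text \<open>Preimages in k{X \<union> dotX} of V and V_2.\<close>
definition VM :: "'x set \<Rightarrow> (('x + 'x) btree \<Rightarrow> 'k::field) set" where
  "VM X = lin_span {mono t | t. t \<in> monoms X \<and> dot_deg t \<ge> 1}"
definition V2M :: "'x set \<Rightarrow> (('x + 'x) btree \<Rightarrow> 'k::field) set" where
  "V2M X = lin_span {mono t | t. t \<in> monoms X \<and> dot_deg t = 1}"

definition dotgens :: "'x set \<Rightarrow> (('x + 'x) btree \<Rightarrow> 'k::field) set" where
  "dotgens X = {mono (Leaf (Inr x)) | x. x \<in> X}"

end

theory Submission
  imports Defs
begin

text \<open>The identity map realises the isomorphism. First, the subalgebra \<open>A\<close> generated by the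
  dotted letters is all of \<open>V\<close> (resp. \<open>V\<^sub>2\<close>): a monomial \<open>u v\<close> with a dotted letter is
  \<open>u' \<turnstile> v\<close>, \<open>u \<stileturn> v'\<close> or \<open>u \<perp> v\<close>, where \<open>u'\<close> is the undotted \<open>u\<close> with its leftmost letter
  dotted, so that \<open>phi u' = u\<close>. It remains to show \<open>V \<inter> I = J\<close>. Since \<open>phi\<close> is a
  homomorphism mapping the verbal ideal \<open>T\<close> and \<open>S \<union> phi(S)\<close> into themselves, \<open>I\<close> is
  \<open>phi\<close>-invariant, which gives \<open>J \<subseteq> I\<close>. Conversely, every \<open>a \<in> I\<close> has its component
  of admissible dot degree in \<open>J\<close> and its undotted component equal to \<open>phi b\<close> for some
  \<open>b \<in> J\<close>: this property is stable under sums and under products with arbitrary elements,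
  and holds for \<open>S\<close> and \<open>phi(S)\<close>; for the values of a polylinear identity it reduces to
  substitutions of monomials, whose values are homogeneous in the dot degree and, when
  undotted, are \<open>phi\<close>-images of values with a single dotted letter.\<close>

lemma mmul_Leaf [simp]: "mmul f g (Leaf a) = 0"
  by (simp add: mmul_def)

lemma mmul_Node [simp]: "mmul f g (Node a b) = f a * g b"
  by (simp add: mmul_def)

lemma madd_apply: "madd f g t = f t + g t"
  and msub_apply: "msub f g t = f t - g t"
  and msc_apply: "msc c f t = c * f t"
  and mzero_apply: "mzero t = 0"
  by (simp_all add: madd_def msub_def msc_def mzero_def)

lemmas m_apply = madd_apply msub_apply msc_apply mzero_apply

lemma msub_self: "msub f f = mzero"
  by (rule ext) (simp add: m_apply)

lemma mmul_madd_left: "mmul (madd f g) h = madd (mmul f h) (mmul g h)"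
  and mmul_madd_right: "mmul h (madd f g) = madd (mmul h f) (mmul h g)"
  and mmul_msc_left: "mmul (msc c f) h = msc c (mmul f h)"
  and mmul_msc_right: "mmul h (msc c f) = msc c (mmul h f)"
  and mmul_mzero_left: "mmul mzero h = mzero"
  and mmul_mzero_right: "mmul h mzero = mzero"
  by (rule ext, simp add: mmul_def m_apply algebra_simps split: btree.split)+

lemma mmul_mono: "mmul (mono a) (mono b) = mono (Node a b)"
  by (rule ext) (simp add: mmul_def mono_def split: btree.split)

subsection \<open>Dot degree and the collapse map\<close>

lemma collapse_Leaf [simp]: "collapse (Leaf y) = Leaf (Inl (case_sum id id y))"
  and collapse_Node [simp]: "collapse (Node l r) = Node (collapse l) (collapse r)"
  by (simp_all add: collapse_def)

lemma dot_deg_Leaf_Inl [simp]: "dot_deg (Leaf (Inl x)) = 0"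
  and dot_deg_Leaf_Inr [simp]: "dot_deg (Leaf (Inr x)) = 1"
  and dot_deg_Node [simp]: "dot_deg (Node l r) = dot_deg l + dot_deg r"
  by (simp_all add: dot_deg_def)

lemma dot_deg_collapse [simp]: "dot_deg (collapse t) = 0"
  by (induction t) (auto split: sum.split)

lemma dot_deg_eq_0_iff_collapse: "dot_deg t = 0 \<longleftrightarrow> collapse t = t"
  by (induction t) (auto split: sum.split)

lemma collapse_in_monoms: "t \<in> monoms X \<Longrightarrow> collapse t \<in> monoms X"
  by (auto simp: monoms_def collapse_def btree.set_map split: sum.split)

lemma monoms_Node [simp]: "Node l r \<in> monoms X \<longleftrightarrow> l \<in> monoms X \<and> r \<in> monoms X"
  by (auto simp: monoms_def)

lemma collapse_vimage_Leaf_Inl: "collapse -` {Leaf (Inl x)} = {Leaf (Inl x), Leaf (Inr x)}"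
proof -
  have "collapse t = Leaf (Inl x) \<longleftrightarrow> t = Leaf (Inl x) \<or> t = Leaf (Inr x)" for t
    by (cases t) (auto split: sum.split)
  then show ?thesis by auto
qed

lemma collapse_vimage_Leaf_Inr: "collapse -` {Leaf (Inr x)} = {}"
proof -
  have "collapse t \<noteq> Leaf (Inr x)" for t
    by (cases t) (auto split: sum.split)
  then show ?thesis by auto
qed

lemma collapse_vimage_Node:
  "collapse -` {Node s1 s2} = (\<lambda>(l, r). Node l r) ` (collapse -` {s1} \<times> collapse -` {s2})"
proof -
  have "collapse t = Node s1 s2 \<longleftrightarrow> (\<exists>l r. t = Node l r \<and> collapse l = s1 \<and> collapse r = s2)" for t
    by (cases t) auto
  then show ?thesis by fastforce
qed

lemma finite_collapse_vimage [simp]: "finite (collapse -` {s})"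
proof (induction s)
  case (Leaf y)
  then show ?case
    by (cases y) (simp_all add: collapse_vimage_Leaf_Inl collapse_vimage_Leaf_Inr)
next
  case (Node s1 s2)
  then show ?case by (simp add: collapse_vimage_Node)
qed

subsection \<open>The homomorphism \<open>phi\<close>\<close>

lemma phi_apply: "phi f s = sum f (collapse -` {s})"
  unfolding phi_def by (rule sum.mono_neutral_left) auto

lemma phi_mmul: "phi (mmul a b) = mmul (phi a) (phi b)"
proof
  fix s
  show "phi (mmul a b) s = mmul (phi a) (phi b) s"
  proof (cases s)
    case (Leaf y)
    then show ?thesis
      by (cases y) (simp_all add: phi_apply collapse_vimage_Leaf_Inl collapse_vimage_Leaf_Inr)
  next
    case (Node s1 s2)
    have "sum (mmul a b) (collapse -` {s})
        = (\<Sum>(l, r) \<in> collapse -` {s1} \<times> collapse -` {s2}. a l * b r)"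
      unfolding Node collapse_vimage_Node
      by (subst sum.reindex) (auto simp: inj_on_def intro!: sum.cong)
    also have "\<dots> = sum a (collapse -` {s1}) * sum b (collapse -` {s2})"
      by (simp add: sum_product sum.cartesian_product)
    finally show ?thesis
      using Node by (simp add: phi_apply)
  qed
qed

lemma phi_madd: "phi (madd f g) = madd (phi f) (phi g)"
  and phi_msc: "phi (msc c f) = msc c (phi f)"
  and phi_mzero: "phi mzero = mzero"
  by (rule ext, simp add: phi_apply m_apply sum.distrib sum_distrib_left)+

lemma phi_mono: "phi (mono t) = mono (collapse t)"
  by (rule ext) (auto simp: phi_apply mono_def sum.delta)

lemma phi_apply_eq_0: "dot_deg s \<noteq> 0 \<Longrightarrow> phi f s = 0"
  by (auto simp: phi_apply intro!: sum.neutral)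

lemma phi_phi: "phi (phi f) = phi f"
proof
  fix s
  have "phi (phi f) s = (\<Sum>t \<in> collapse -` {s}. if t = s then phi f t else 0)"
    unfolding phi_apply[of "phi f"]
  proof (rule sum.cong)
    fix t assume "t \<in> collapse -` {s}"
    then show "phi f t = (if t = s then phi f t else 0)"
      using phi_apply_eq_0[of t f] dot_deg_eq_0_iff_collapse[of t] by auto
  qed simp
  also have "\<dots> = phi f s"
    using phi_apply_eq_0 dot_deg_eq_0_iff_collapse by (force simp: sum.delta')
  finally show "phi (phi f) s = phi f s" .
qed

lemma mzero_in_phi_image: "mzero \<in> K \<Longrightarrow> mzero \<in> phi ` K"
  by (rule image_eqI[where x = mzero]) (simp_all add: phi_mzero)

subsection \<open>Finitely supported elements and their homogeneous components\<close>

definition supp :: "('a btree \<Rightarrow> 'k::field) \<Rightarrow> 'a btree set" where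
  "supp f = {t. f t \<noteq> 0}"

lemma Melt_iff: "Melt X f \<longleftrightarrow> finite (supp f) \<and> supp f \<subseteq> monoms X"
  by (auto simp: Melt_def supp_def monoms_def)

lemma Melt_mzero: "Melt X mzero"
  by (simp add: Melt_iff supp_def m_apply)

lemma Melt_madd:
  assumes "Melt X f" "Melt X g"
  shows "Melt X (madd f g)"
proof -
  have "supp (madd f g) \<subseteq> supp f \<union> supp g"
    by (auto simp: supp_def m_apply)
  then show ?thesis
    using assms unfolding Melt_iff by (meson finite_Un finite_subset le_sup_iff subset_trans)
qed

lemma Melt_msc: "Melt X f \<Longrightarrow> Melt X (msc c f)"
  unfolding Melt_iff by (auto simp: supp_def m_apply elim: finite_subset[rotated])

lemma Melt_mono: "t \<in> monoms X \<Longrightarrow> Melt X (mono t)"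
  by (auto simp: Melt_iff supp_def mono_def)

lemma supp_mmul: "supp (mmul f g) \<subseteq> (\<lambda>(l, r). Node l r) ` (supp f \<times> supp g)"
proof
  fix t assume "t \<in> supp (mmul f g)"
  then show "t \<in> (\<lambda>(l, r). Node l r) ` (supp f \<times> supp g)"
    by (cases t) (auto simp: supp_def)
qed

lemma Melt_mmul:
  assumes "Melt X f" "Melt X g"
  shows "Melt X (mmul f g)"
  unfolding Melt_iff
proof
  show "finite (supp (mmul f g))"
    using assms supp_mmul[of f g] by (auto simp: Melt_iff intro: finite_subset)
  show "supp (mmul f g) \<subseteq> monoms X"
    using assms supp_mmul[of f g] by (fastforce simp: Melt_iff)
qed

lemma supp_phi: "supp (phi f) \<subseteq> collapse ` supp f"
proof
  fix s assume "s \<in> supp (phi f)"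
  then obtain t where "t \<in> collapse -` {s}" "f t \<noteq> 0"
    unfolding supp_def phi_apply by (auto dest: sum.not_neutral_contains_not_neutral)
  then show "s \<in> collapse ` supp f" by (auto simp: supp_def)
qed

lemma Melt_phi: "Melt X f \<Longrightarrow> Melt X (phi f)"
  using supp_phi[of f] collapse_in_monoms unfolding Melt_iff by (blast intro: finite_subset)

definition dot_span :: "'x set \<Rightarrow> (nat \<Rightarrow> bool) \<Rightarrow> (('x + 'x) btree \<Rightarrow> 'k::field) set" where
  "dot_span X P = {f. Melt X f \<and> (\<forall>t \<in> supp f. P (dot_deg t))}"

lemma dot_span_Melt: "f \<in> dot_span X P \<Longrightarrow> Melt X f"
  by (simp add: dot_span_def)

lemma dot_span_mzero: "mzero \<in> dot_span X P"
  by (simp add: dot_span_def Melt_mzero supp_def m_apply)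

lemma dot_span_madd: "f \<in> dot_span X P \<Longrightarrow> g \<in> dot_span X P \<Longrightarrow> madd f g \<in> dot_span X P"
  by (auto simp: dot_span_def supp_def Melt_madd m_apply) (metis add.right_neutral)

lemma dot_span_msc: "f \<in> dot_span X P \<Longrightarrow> msc c f \<in> dot_span X P"
  by (simp add: dot_span_def supp_def Melt_msc m_apply)

lemma dot_span_mono: "t \<in> monoms X \<Longrightarrow> P (dot_deg t) \<Longrightarrow> mono t \<in> dot_span X P"
  unfolding dot_span_def using Melt_mono[of t X] by (auto simp: supp_def mono_def)

lemma dot_span_subset: "(\<And>d. P d \<Longrightarrow> Q d) \<Longrightarrow> dot_span X P \<subseteq> dot_span X Q"
  by (auto simp: dot_span_def)

lemma dot_span_induct [consumes 1, case_names mono zero add smult]: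
  assumes "f \<in> dot_span X P"
    and mono: "\<And>t. t \<in> monoms X \<Longrightarrow> P (dot_deg t) \<Longrightarrow> Q (mono t)"
    and zero: "Q mzero"
    and add: "\<And>a b. Q a \<Longrightarrow> Q b \<Longrightarrow> Q (madd a b)"
    and smult: "\<And>c a. Q a \<Longrightarrow> Q (msc c a)"
  shows "Q f"
proof -
  have "Q f" if "finite F" "f \<in> dot_span X P" "supp f \<subseteq> F" for F f
    using that
  proof (induction F arbitrary: f rule: finite_induct)
    case empty
    then have "f = mzero" by (auto simp: supp_def mzero_def)
    then show ?case using zero by simp
  next
    case (insert t F)
    have "supp (f(t := 0)) \<subseteq> supp f"
      by (auto simp: supp_def)
    then have rest: "Q (f(t := 0))"
      using insert.prems
      by (intro insert.IH) (auto simp: dot_span_def Melt_iff supp_def intro: finite_subset)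
    show ?case
    proof (cases "f t = 0")
      case True
      then show ?thesis using rest by (simp add: fun_upd_idem)
    next
      case False
      then have "Q (mono t)"
        using insert.prems by (intro mono) (auto simp: dot_span_def Melt_iff supp_def)
      moreover have "f = madd (msc (f t) (mono t)) (f(t := 0))"
        by (rule ext) (simp add: mono_def m_apply)
      ultimately show ?thesis using rest add smult by metis
    qed
  qed
  then show ?thesis using assms(1) by (auto simp: dot_span_def Melt_iff)
qed

lemma lin_span_monos_eq_dot_span:
  "lin_span {mono t | t. t \<in> monoms X \<and> P (dot_deg t)} = dot_span X P"
proof
  show "lin_span {mono t | t. t \<in> monoms X \<and> P (dot_deg t)} \<subseteq> dot_span X P"
  proof
    fix f assume "f \<in> lin_span {mono t | t. t \<in> monoms X \<and> P (dot_deg t)}"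
    then show "f \<in> dot_span X P"
      by induction (auto intro: dot_span_mzero dot_span_madd dot_span_msc dot_span_mono)
  qed
  show "dot_span X P \<subseteq> lin_span {mono t | t. t \<in> monoms X \<and> P (dot_deg t)}"
  proof
    fix f assume "f \<in> dot_span X P"
    then show "f \<in> lin_span {mono t | t. t \<in> monoms X \<and> P (dot_deg t)}"
      by (induction rule: dot_span_induct) (auto intro: subalg_gen.intros)
  qed
qed

lemma VM_eq_dot_span: "VM X = dot_span X (\<lambda>d. 1 \<le> d)"
  unfolding VM_def by (rule lin_span_monos_eq_dot_span)

lemma V2M_eq_dot_span: "V2M X = dot_span X (\<lambda>d. d = 1)"
  unfolding V2M_def by (rule lin_span_monos_eq_dot_span)

definition dot_part :: "(nat \<Rightarrow> bool) \<Rightarrow> (('x + 'x) btree \<Rightarrow> 'k::field) \<Rightarrow> (('x + 'x) btree \<Rightarrow> 'k)" where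
  "dot_part P f = (\<lambda>t. if P (dot_deg t) then f t else 0)"

abbreviation plain_part :: "(('x + 'x) btree \<Rightarrow> 'k::field) \<Rightarrow> (('x + 'x) btree \<Rightarrow> 'k)" where
  "plain_part \<equiv> dot_part (\<lambda>d. d = 0)"

lemma dot_part_apply: "dot_part P f t = (if P (dot_deg t) then f t else 0)"
  by (simp add: dot_part_def)

lemma dot_part_in_dot_span: "Melt X f \<Longrightarrow> dot_part P f \<in> dot_span X P"
  unfolding dot_span_def Melt_iff
  by (auto simp: supp_def dot_part_def elim: finite_subset[rotated])

lemma dot_part_madd: "dot_part P (madd f g) = madd (dot_part P f) (dot_part P g)"
  and dot_part_msc: "dot_part P (msc c f) = msc c (dot_part P f)"
  and dot_part_mzero: "dot_part P mzero = mzero"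
  by (rule ext, simp add: dot_part_def m_apply)+

lemma dot_part_id: "f \<in> dot_span X P \<Longrightarrow> dot_part P f = f"
  by (rule ext) (auto simp: dot_part_def dot_span_def supp_def)

lemma dot_part_eq_mzero: "f \<in> dot_span X Q \<Longrightarrow> (\<And>d. Q d \<Longrightarrow> \<not> P d) \<Longrightarrow> dot_part P f = mzero"
  by (rule ext) (auto simp: dot_part_def dot_span_def supp_def m_apply)

lemma plain_part_phi: "plain_part (phi f) = phi f"
  by (rule ext) (simp add: dot_part_def phi_apply_eq_0)

lemma dot_part_phi: "\<not> P 0 \<Longrightarrow> dot_part P (phi f) = mzero"
  by (rule ext) (metis dot_part_def mzero_apply phi_apply_eq_0)

lemma plain_part_mmul: "plain_part (mmul f g) = mmul (plain_part f) (plain_part g)"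
  by (rule ext) (simp add: dot_part_def mmul_def split: btree.split)

fun dot_leftmost :: "('x + 'x) btree \<Rightarrow> ('x + 'x) btree" where
  "dot_leftmost (Leaf y) = Leaf (Inr (case_sum id id y))"
| "dot_leftmost (Node l r) = Node (dot_leftmost l) r"

lemma collapse_dot_leftmost: "dot_deg t = 0 \<Longrightarrow> collapse (dot_leftmost t) = t"
  by (induction t) (auto simp: dot_deg_eq_0_iff_collapse split: sum.split)

lemma dot_deg_dot_leftmost: "dot_deg t = 0 \<Longrightarrow> dot_deg (dot_leftmost t) = 1"
  by (induction t) (auto split: sum.split)

lemma dot_leftmost_in_monoms: "t \<in> monoms X \<Longrightarrow> dot_leftmost t \<in> monoms X"
  by (induction t) (auto simp: monoms_def split: sum.split)

lemma plain_in_phi_image: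
  assumes "f \<in> dot_span X (\<lambda>d. d = 0)"
  shows "f \<in> phi ` dot_span X (\<lambda>d. d = 1)"
  using assms
proof (induction rule: dot_span_induct)
  case (mono t)
  then have "mono t = phi (mono (dot_leftmost t))"
    by (simp add: phi_mono collapse_dot_leftmost)
  moreover have "mono (dot_leftmost t) \<in> dot_span X (\<lambda>d. d = 1)"
    using mono by (simp add: dot_span_mono dot_leftmost_in_monoms dot_deg_dot_leftmost)
  ultimately show ?case by blast
next
  case zero
  show ?case using dot_span_mzero by (rule mzero_in_phi_image)
next
  case (add a b)
  then obtain a' b' where "a' \<in> dot_span X (\<lambda>d. d = 1)" "a = phi a'"
    and "b' \<in> dot_span X (\<lambda>d. d = 1)" "b = phi b'"
    by blast
  then show ?case by (auto simp: phi_madd intro!: image_eqI[of _ _ "madd a' b'"] dot_span_madd)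
next
  case (smult c a)
  then obtain a' where "a' \<in> dot_span X (\<lambda>d. d = 1)" "a = phi a'"
    by blast
  then show ?case by (auto simp: phi_msc intro!: image_eqI[of _ _ "msc c a'"] dot_span_msc)
qed

subsection \<open>Evaluation of polylinear polynomials\<close>

lemma leaves_nonempty: "leaves t \<noteq> []"
  by (induction t) auto

lemma eval_mono_cong: "(\<And>i. i \<in> set (leaves t) \<Longrightarrow> u i = v i) \<Longrightarrow> eval_mono u t = eval_mono v t"
  by (induction t) auto

lemma eval_mono_upd_other: "i \<notin> set (leaves t) \<Longrightarrow> eval_mono (u(i := f)) t = eval_mono u t"
  by (rule eval_mono_cong) auto

lemma eval_mono_upd_madd:
  "distinct (leaves t) \<Longrightarrow> i \<in> set (leaves t) \<Longrightarrow>
    eval_mono (u(i := madd f g)) t = madd (eval_mono (u(i := f)) t) (eval_mono (u(i := g)) t)"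
proof (induction t)
  case (Node a b)
  show ?case
  proof (cases "i \<in> set (leaves a)")
    case True
    have "eval_mono (u(i := madd f g)) a = madd (eval_mono (u(i := f)) a) (eval_mono (u(i := g)) a)"
      by (rule Node.IH(1)) (use Node.prems True in auto)
    moreover have "i \<notin> set (leaves b)" using Node.prems True by auto
    ultimately show ?thesis
      by (simp only: eval_mono.simps eval_mono_upd_other not_False_eq_True mmul_madd_left)
  next
    case False
    have "eval_mono (u(i := madd f g)) b = madd (eval_mono (u(i := f)) b) (eval_mono (u(i := g)) b)"
      by (rule Node.IH(2)) (use Node.prems False in auto)
    with False show ?thesis
      by (simp only: eval_mono.simps eval_mono_upd_other not_False_eq_True mmul_madd_right)
  qed
qed simp

lemma eval_mono_upd_msc:
  "distinct (leaves t) \<Longrightarrow> i \<in> set (leaves t) \<Longrightarrow>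
    eval_mono (u(i := msc c f)) t = msc c (eval_mono (u(i := f)) t)"
proof (induction t)
  case (Node a b)
  show ?case
  proof (cases "i \<in> set (leaves a)")
    case True
    have "eval_mono (u(i := msc c f)) a = msc c (eval_mono (u(i := f)) a)"
      by (rule Node.IH(1)) (use Node.prems True in auto)
    moreover have "i \<notin> set (leaves b)" using Node.prems True by auto
    ultimately show ?thesis
      by (simp only: eval_mono.simps eval_mono_upd_other not_False_eq_True mmul_msc_left)
  next
    case False
    have "eval_mono (u(i := msc c f)) b = msc c (eval_mono (u(i := f)) b)"
      by (rule Node.IH(2)) (use Node.prems False in auto)
    with False show ?thesis
      by (simp only: eval_mono.simps eval_mono_upd_other not_False_eq_True mmul_msc_right)
  qed
qed simp

lemma eval_mono_upd_mzero:
  "i \<in> set (leaves t) \<Longrightarrow> eval_mono (u(i := mzero)) t = mzero"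
  by (induction t) (auto simp: mmul_mzero_left mmul_mzero_right)

lemma
  assumes "\<And>t. \<Phi> t \<noteq> 0 \<Longrightarrow> distinct (leaves t) \<and> i \<in> set (leaves t)"
  shows eval_poly_upd_madd:
      "eval_poly \<Phi> (u(i := madd f g)) = madd (eval_poly \<Phi> (u(i := f))) (eval_poly \<Phi> (u(i := g)))"
    and eval_poly_upd_msc: "eval_poly \<Phi> (u(i := msc c f)) = msc c (eval_poly \<Phi> (u(i := f)))"
    and eval_poly_upd_mzero: "eval_poly \<Phi> (u(i := mzero)) = mzero"
proof -
  show "eval_poly \<Phi> (u(i := madd f g)) = madd (eval_poly \<Phi> (u(i := f))) (eval_poly \<Phi> (u(i := g)))"
  proof
    fix s
    have "eval_poly \<Phi> (u(i := madd f g)) s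
        = (\<Sum>t | \<Phi> t \<noteq> 0. \<Phi> t * eval_mono (u(i := f)) t s + \<Phi> t * eval_mono (u(i := g)) t s)"
      unfolding eval_poly_def
      by (rule sum.cong) (simp_all add: assms eval_mono_upd_madd madd_apply distrib_left)
    then show "eval_poly \<Phi> (u(i := madd f g)) s
        = madd (eval_poly \<Phi> (u(i := f))) (eval_poly \<Phi> (u(i := g))) s"
      by (simp add: eval_poly_def madd_apply sum.distrib)
  qed
  show "eval_poly \<Phi> (u(i := msc c f)) = msc c (eval_poly \<Phi> (u(i := f)))"
  proof
    fix s
    have "eval_poly \<Phi> (u(i := msc c f)) s = (\<Sum>t | \<Phi> t \<noteq> 0. c * (\<Phi> t * eval_mono (u(i := f)) t s))"
      unfolding eval_poly_def
      by (rule sum.cong) (simp_all add: assms eval_mono_upd_msc msc_apply mult.left_commute)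
    then show "eval_poly \<Phi> (u(i := msc c f)) s = msc c (eval_poly \<Phi> (u(i := f))) s"
      by (simp add: eval_poly_def msc_apply sum_distrib_left)
  qed
  show "eval_poly \<Phi> (u(i := mzero)) = mzero"
  proof
    fix s
    have "eval_poly \<Phi> (u(i := mzero)) s = (\<Sum>t | \<Phi> t \<noteq> 0. 0)"
      unfolding eval_poly_def
      by (rule sum.cong) (simp_all add: assms eval_mono_upd_mzero mzero_apply)
    then show "eval_poly \<Phi> (u(i := mzero)) s = mzero s"
      by (simp add: mzero_apply)
  qed
qed

lemma eval_poly_cong:
  "(\<And>t i. \<Phi> t \<noteq> 0 \<Longrightarrow> i \<in> set (leaves t) \<Longrightarrow> u i = v i) \<Longrightarrow> eval_poly \<Phi> u = eval_poly \<Phi> v"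
  unfolding eval_poly_def by (rule ext, rule sum.cong) (simp_all add: eval_mono_cong[of _ u v])

lemma phi_eval_mono: "phi (eval_mono u t) = eval_mono (\<lambda>i. phi (u i)) t"
  by (induction t) (simp_all add: phi_mmul)

lemma phi_eval_poly:
  assumes "finite {t. \<Phi> t \<noteq> 0}"
  shows "phi (eval_poly \<Phi> u) = eval_poly \<Phi> (\<lambda>i. phi (u i))"
proof
  fix s
  have "phi (eval_poly \<Phi> u) s = (\<Sum>r \<in> collapse -` {s}. \<Sum>t | \<Phi> t \<noteq> 0. \<Phi> t * eval_mono u t r)"
    by (simp add: phi_apply eval_poly_def)
  also have "\<dots> = (\<Sum>t | \<Phi> t \<noteq> 0. \<Phi> t * (\<Sum>r \<in> collapse -` {s}. eval_mono u t r))"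
    by (subst sum.swap) (simp add: sum_distrib_left)
  also have "\<dots> = eval_poly \<Phi> (\<lambda>i. phi (u i)) s"
    by (simp add: eval_poly_def phi_eval_mono[symmetric] phi_apply)
  finally show "phi (eval_poly \<Phi> u) s = eval_poly \<Phi> (\<lambda>i. phi (u i)) s" .
qed

lemma eval_poly_degree_0:
  assumes "\<And>t. \<Phi> t \<noteq> 0 \<Longrightarrow> set (leaves t) = {1..0}"
  shows "eval_poly \<Phi> u = mzero"
proof -
  have "\<Phi> t = 0" for t
    using assms[of t] leaves_nonempty[of t] by fastforce
  then show ?thesis by (simp add: eval_poly_def mzero_def)
qed

lemma eval_poly_at_monomials:
  assumes pl: "\<And>t. \<Phi> t \<noteq> 0 \<Longrightarrow> set (leaves t) = {1..n}" and "1 \<le> n"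
    and v: "\<And>i. i \<in> {1..n} \<Longrightarrow> v i \<in> mono ` monoms X"
  obtains \<tau> where "\<And>i. \<tau> i \<in> monoms X" "eval_poly \<Phi> v = eval_poly \<Phi> (\<lambda>i. mono (\<tau> i))"
proof -
  have "\<forall>i \<in> {1..n}. \<exists>t. t \<in> monoms X \<and> v i = mono t"
    using v by blast
  then obtain \<tau> where \<tau>: "\<forall>i \<in> {1..n}. \<tau> i \<in> monoms X \<and> v i = mono (\<tau> i)"
    by (rule bchoice[THEN exE])
  define \<tau>' where "\<tau>' i = (if i \<in> {1..n} then \<tau> i else \<tau> 1)" for i
  have "\<tau>' i \<in> monoms X" for i
    using \<tau> \<open>1 \<le> n\<close> by (simp add: \<tau>'_def)
  moreover have "eval_poly \<Phi> v = eval_poly \<Phi> (\<lambda>i. mono (\<tau>' i))"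
    by (rule eval_poly_cong) (use pl \<tau> in \<open>simp add: \<tau>'_def\<close>)
  ultimately show ?thesis by (rule that)
qed

lemma eval_poly_induct_monomials:
  assumes pl: "\<And>t. \<Phi> t \<noteq> 0 \<Longrightarrow> distinct (leaves t) \<and> set (leaves t) = {1..n}" and "1 \<le> n"
    and u: "\<And>i. Melt X (u i)"
    and Q_monomials: "\<And>\<tau>. (\<And>i. \<tau> i \<in> monoms X) \<Longrightarrow> Q (eval_poly \<Phi> (\<lambda>i. mono (\<tau> i)))"
    and Q_zero: "Q mzero"
    and Q_add: "\<And>a b. Q a \<Longrightarrow> Q b \<Longrightarrow> Q (madd a b)"
    and Q_smult: "\<And>c a. Q a \<Longrightarrow> Q (msc c a)"
  shows "Q (eval_poly \<Phi> u)"
proof -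
  have "Q (eval_poly \<Phi> v)"
    if "\<And>i. Melt X (v i)" "\<And>i. k < i \<Longrightarrow> i \<le> n \<Longrightarrow> v i \<in> mono ` monoms X" for k v
    using that
  proof (induction k arbitrary: v)
    case 0
    obtain \<tau> where "\<And>i. \<tau> i \<in> monoms X" "eval_poly \<Phi> v = eval_poly \<Phi> (\<lambda>i. mono (\<tau> i))"
      by (rule eval_poly_at_monomials[of \<Phi> n v X]) (use pl \<open>1 \<le> n\<close> 0 in auto)
    then show ?case using Q_monomials by simp
  next
    case (Suc k)
    show ?case
    proof (cases "Suc k \<le> n")
      case False
      then show ?thesis by (intro Suc.IH Suc.prems) simp_all
    next
      case True
      have lin: "\<And>t. \<Phi> t \<noteq> 0 \<Longrightarrow> distinct (leaves t) \<and> Suc k \<in> set (leaves t)"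
        using pl True by simp
      have "Q (eval_poly \<Phi> (v(Suc k := f)))" if "f \<in> dot_span X (\<lambda>_. True)" for f
        using that
      proof (induction rule: dot_span_induct)
        case (mono t)
        then show ?case
          by (intro Suc.IH) (simp_all add: Suc.prems Melt_mono)
      next
        case zero
        show ?case
          using Q_zero eval_poly_upd_mzero[where u = v, OF lin] unfolding fun_upd_def by simp
      next
        case (add a b)
        then show ?case
          using Q_add eval_poly_upd_madd[where u = v, OF lin] unfolding fun_upd_def by simp
      next
        case (smult c a)
        then show ?case
          using Q_smult eval_poly_upd_msc[where u = v, OF lin] unfolding fun_upd_def by simp
      qed
      moreover have "v (Suc k) \<in> dot_span X (\<lambda>_. True)"
        using Suc.prems by (simp add: dot_span_def)
      ultimately show ?thesis by (metis fun_upd_triv)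
    qed
  qed
  from this[where k = n and v = u] show ?thesis
    using u by simp
qed

fun btree_subst :: "(nat \<Rightarrow> 'a btree) \<Rightarrow> nat btree \<Rightarrow> 'a btree" where
  "btree_subst \<tau> (Leaf i) = \<tau> i"
| "btree_subst \<tau> (Node a b) = Node (btree_subst \<tau> a) (btree_subst \<tau> b)"

lemma eval_mono_mono: "eval_mono (\<lambda>i. mono (\<tau> i)) t = mono (btree_subst \<tau> t)"
  by (induction t) (simp_all add: mmul_mono)

lemma dot_deg_btree_subst: "dot_deg (btree_subst \<tau> t) = (\<Sum>i \<leftarrow> leaves t. dot_deg (\<tau> i))"
  by (induction t) simp_all

lemma btree_subst_in_monoms:
  "(\<And>i. i \<in> set (leaves t) \<Longrightarrow> \<tau> i \<in> monoms X) \<Longrightarrow> btree_subst \<tau> t \<in> monoms X"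
  by (induction t) simp_all

lemma eval_poly_mono_in_dot_span:
  fixes \<Phi> :: "nat btree \<Rightarrow> 'k::field"
  assumes fin: "finite {t. \<Phi> t \<noteq> 0}"
    and pl: "\<And>t. \<Phi> t \<noteq> 0 \<Longrightarrow> distinct (leaves t) \<and> set (leaves t) = {1..n}"
    and \<tau>: "\<And>i. i \<in> {1..n} \<Longrightarrow> \<tau> i \<in> monoms X"
  shows "eval_poly \<Phi> (\<lambda>i. mono (\<tau> i)) \<in> dot_span X (\<lambda>d. d = (\<Sum>i = 1..n. dot_deg (\<tau> i)))"
proof -
  let ?F = "{t. \<Phi> t \<noteq> 0}"
  have supp: "supp (eval_poly \<Phi> (\<lambda>i. mono (\<tau> i))) \<subseteq> btree_subst \<tau> ` ?F"
  proof
    fix s assume "s \<in> supp (eval_poly \<Phi> (\<lambda>i. mono (\<tau> i)))"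
    then have "(\<Sum>t \<in> ?F. \<Phi> t * mono (btree_subst \<tau> t) s) \<noteq> 0"
      by (simp add: supp_def eval_poly_def eval_mono_mono)
    then obtain t where "t \<in> ?F" "\<Phi> t * mono (btree_subst \<tau> t) s \<noteq> 0"
      by (rule sum.not_neutral_contains_not_neutral)
    then show "s \<in> btree_subst \<tau> ` ?F"
      by (cases "s = btree_subst \<tau> t") (simp_all add: mono_def)
  qed
  have fin_supp: "finite (supp (eval_poly \<Phi> (\<lambda>i. mono (\<tau> i))))"
    using supp fin by (meson finite_imageI finite_subset)
  have in_monoms: "btree_subst \<tau> t \<in> monoms X" if "t \<in> ?F" for t
    using pl[of t] that \<tau> by (intro btree_subst_in_monoms) auto
  have deg: "dot_deg (btree_subst \<tau> t) = (\<Sum>i = 1..n. dot_deg (\<tau> i))" if "t \<in> ?F" for t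
    using pl[of t] that by (simp add: dot_deg_btree_subst sum_list_distinct_conv_sum_set)
  show ?thesis
    unfolding dot_span_def Melt_iff mem_Collect_eq
  proof (intro conjI ballI subsetI fin_supp)
    fix s assume "s \<in> supp (eval_poly \<Phi> (\<lambda>i. mono (\<tau> i)))"
    then obtain t where "t \<in> ?F" "s = btree_subst \<tau> t"
      using supp by blast
    then show "s \<in> monoms X" "dot_deg s = (\<Sum>i = 1..n. dot_deg (\<tau> i))"
      using in_monoms deg by simp_all
  qed
qed

lemma eval_poly_dot_leftmost_in_dot_span:
  fixes \<Phi> :: "nat btree \<Rightarrow> 'k::field"
  assumes fin: "finite {t. \<Phi> t \<noteq> 0}"
    and pl: "\<And>t. \<Phi> t \<noteq> 0 \<Longrightarrow> distinct (leaves t) \<and> set (leaves t) = {1..n}"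
    and "1 \<le> n"
    and \<tau>: "\<And>i. i \<in> {1..n} \<Longrightarrow> \<tau> i \<in> monoms X"
    and plain: "\<And>i. i \<in> {1..n} \<Longrightarrow> dot_deg (\<tau> i) = 0"
  shows "eval_poly \<Phi> (\<lambda>i. mono ((\<tau>(1 := dot_leftmost (\<tau> 1))) i)) \<in> dot_span X (\<lambda>d. d = 1)"
proof -
  let ?\<tau>' = "\<tau>(1 := dot_leftmost (\<tau> 1))"
  have one: "1 \<in> {1..n}" using \<open>1 \<le> n\<close> by simp
  have "(\<Sum>i = 1..n. dot_deg (?\<tau>' i)) = dot_deg (?\<tau>' 1) + (\<Sum>i \<in> {1..n} - {1}. dot_deg (?\<tau>' i))"
    by (rule sum.remove) (use one in auto)
  also have "\<dots> = 1"
    using plain one by (simp add: dot_deg_dot_leftmost)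
  finally show ?thesis
    using eval_poly_mono_in_dot_span[OF fin pl, of ?\<tau>' X] \<tau> one
    by (simp add: dot_leftmost_in_monoms)
qed

lemma phi_eval_poly_dot_leftmost:
  fixes \<Phi> :: "nat btree \<Rightarrow> 'k::field"
  assumes fin: "finite {t. \<Phi> t \<noteq> 0}"
    and pl: "\<And>t. \<Phi> t \<noteq> 0 \<Longrightarrow> set (leaves t) = {1..n}"
    and plain: "\<And>i. i \<in> {1..n} \<Longrightarrow> dot_deg (\<tau> i) = 0"
  shows "phi (eval_poly \<Phi> (\<lambda>i. mono ((\<tau>(1 := dot_leftmost (\<tau> 1))) i)))
    = eval_poly \<Phi> (\<lambda>i. mono (\<tau> i))"
  unfolding phi_eval_poly[OF fin] phi_mono
proof (rule eval_poly_cong)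
  fix t i assume "\<Phi> t \<noteq> 0" "i \<in> set (leaves t)"
  then have "i \<in> {1..n}" using pl by blast
  then show "mono (collapse ((\<tau>(1 := dot_leftmost (\<tau> 1))) i)) = mono (\<tau> i)"
    using plain by (simp add: collapse_dot_leftmost dot_deg_eq_0_iff_collapse)
qed

subsection \<open>The replicated operations on homogeneous components\<close>

lemma opL_in_dot_span:
  assumes "Melt X f" "g \<in> dot_span X P"
  shows "opL f g \<in> dot_span X P"
proof -
  have "P (dot_deg t)" if "opL f g t \<noteq> 0" for t
  proof (cases t)
    case (Node l r)
    then have "phi f l \<noteq> 0" "g r \<noteq> 0" using that by (auto simp: opL_def)
    have "dot_deg l = 0"
      using \<open>phi f l \<noteq> 0\<close> phi_apply_eq_0 by blast
    moreover have "P (dot_deg r)"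
      using \<open>g r \<noteq> 0\<close> assms(2) by (auto simp: dot_span_def supp_def)
    ultimately show ?thesis using Node by simp
  qed (use that in \<open>simp add: opL_def\<close>)
  then show ?thesis
    using assms by (simp add: dot_span_def supp_def opL_def Melt_mmul Melt_phi)
qed

lemma opR_in_dot_span:
  assumes "f \<in> dot_span X P" "Melt X g"
  shows "opR f g \<in> dot_span X P"
proof -
  have "P (dot_deg t)" if "opR f g t \<noteq> 0" for t
  proof (cases t)
    case (Node l r)
    then have "f l \<noteq> 0" "phi g r \<noteq> 0" using that by (auto simp: opR_def)
    have "P (dot_deg l)"
      using \<open>f l \<noteq> 0\<close> assms(1) by (auto simp: dot_span_def supp_def)
    moreover have "dot_deg r = 0"
      using \<open>phi g r \<noteq> 0\<close> phi_apply_eq_0 by blast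
    ultimately show ?thesis using Node by simp
  qed (use that in \<open>simp add: opR_def\<close>)
  then show ?thesis
    using assms by (simp add: dot_span_def supp_def opR_def Melt_mmul Melt_phi)
qed

lemma mmul_in_dot_span:
  assumes "\<And>x y. P x \<Longrightarrow> P y \<Longrightarrow> P (x + y)" "f \<in> dot_span X P" "g \<in> dot_span X P"
  shows "mmul f g \<in> dot_span X P"
proof -
  have "P (dot_deg t)" if "mmul f g t \<noteq> 0" for t
  proof (cases t)
    case (Node l r)
    then have "f l \<noteq> 0" "g r \<noteq> 0" using that by auto
    then show ?thesis using Node assms by (auto simp: dot_span_def supp_def)
  qed (use that in simp)
  then show ?thesis
    using assms by (simp add: dot_span_def supp_def Melt_mmul)
qed

lemma mmul_neq_opL: "mmul \<noteq> (opL :: (('x + 'x) btree \<Rightarrow> 'k::field) \<Rightarrow> _ \<Rightarrow> _)"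
proof -
  let ?f = "mono (Leaf (Inr undefined)) :: ('x + 'x) btree \<Rightarrow> 'k"
  let ?t = "Node (Leaf (Inr undefined)) (Leaf (Inr undefined)) :: ('x + 'x) btree"
  have "mmul ?f ?f ?t \<noteq> opL ?f ?f ?t"
    by (simp add: opL_def mono_def phi_apply_eq_0)
  then show ?thesis by (rule contrapos_nn) simp
qed

lemma mmul_neq_opR: "mmul \<noteq> (opR :: (('x + 'x) btree \<Rightarrow> 'k::field) \<Rightarrow> _ \<Rightarrow> _)"
proof -
  let ?f = "mono (Leaf (Inr undefined)) :: ('x + 'x) btree \<Rightarrow> 'k"
  let ?t = "Node (Leaf (Inr undefined)) (Leaf (Inr undefined)) :: ('x + 'x) btree"
  have "mmul ?f ?f ?t \<noteq> opR ?f ?f ?t"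
    by (simp add: opR_def mono_def phi_apply_eq_0)
  then show ?thesis by (rule contrapos_nn) simp
qed

lemma phi_ideal_gen:
  assumes "\<And>g. g \<in> G \<Longrightarrow> phi g \<in> ideal_gen X H" "a \<in> ideal_gen X G"
  shows "phi a \<in> ideal_gen X H"
  using assms(2)
proof induction
  case (gen g)
  then show ?case by (rule assms(1))
qed (simp_all add: phi_mzero phi_madd phi_msc phi_mmul Melt_phi ideal_gen.intros)

lemma phi_Tideal:
  assumes "\<forall>\<Phi> \<in> Ids. polylinear \<Phi>" "a \<in> Tideal X Ids"
  shows "phi a \<in> Tideal X Ids"
  using assms(2) unfolding Tideal_def
proof (rule phi_ideal_gen[rotated])
  fix g assume "g \<in> {eval_poly \<Phi> u | \<Phi> u. \<Phi> \<in> Ids \<and> (\<forall>i. Melt X (u i))}"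
  then obtain \<Phi> u where g: "g = eval_poly \<Phi> u" "\<Phi> \<in> Ids" "\<forall>i. Melt X (u i)"
    by blast
  then have "phi g = eval_poly \<Phi> (\<lambda>i. phi (u i))"
    using assms(1) by (simp add: phi_eval_poly polylinear_def)
  moreover have "\<forall>i. Melt X (phi (u i))"
    using g(3) by (simp add: Melt_phi)
  ultimately show "phi g \<in> ideal_gen X {eval_poly \<Phi> u | \<Phi> u. \<Phi> \<in> Ids \<and> (\<forall>i. Melt X (u i))}"
    using g(2) by (blast intro: ideal_gen.gen)
qed

lemma phi_ideal_gen_Tideal:
  assumes "\<forall>\<Phi> \<in> Ids. polylinear \<Phi>" "m \<in> ideal_gen X (Tideal X Ids \<union> S \<union> phi ` S)"
  shows "phi m \<in> ideal_gen X (Tideal X Ids \<union> S \<union> phi ` S)"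
  using assms(2)
proof (rule phi_ideal_gen[rotated])
  fix g assume "g \<in> Tideal X Ids \<union> S \<union> phi ` S"
  then have "phi g \<in> Tideal X Ids \<union> S \<union> phi ` S"
    using phi_Tideal[OF assms(1)] phi_phi by auto
  then show "phi g \<in> ideal_gen X (Tideal X Ids \<union> S \<union> phi ` S)"
    by (rule ideal_gen.gen)
qed

lemma quot_iso_identity:
  assumes "W = A" "mzero \<in> K2" "\<And>a. a \<in> W \<Longrightarrow> a \<in> K2 \<longleftrightarrow> a \<in> K1"
  shows "quot_iso W K1 ops A K2 ops"
  unfolding quot_iso_def
proof (intro conjI exI[of _ id] refl)
  show "\<forall>w \<in> A. \<exists>a \<in> W. msub w (id a) \<in> K2"
    using assms(1,2) by (auto simp: msub_self intro!: bexI)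
qed (use assms in \<open>simp_all add: msub_self\<close>)

subsection \<open>Replicated subalgebras and their quotients\<close>

definition parts_in ::
    "(nat \<Rightarrow> bool) \<Rightarrow> (('x + 'x) btree \<Rightarrow> 'k::field) set \<Rightarrow> (('x + 'x) btree \<Rightarrow> 'k) \<Rightarrow> bool"
  where
  "parts_in P J a \<longleftrightarrow> dot_part P a \<in> J \<and> plain_part a \<in> phi ` J"

text \<open>\<open>P\<close> describes the dot degrees of the subalgebra generated by the dotted letters under
  \<open>ops\<close>: all positive degrees for \<open>tri_ops\<close>, degree \<open>1\<close> for \<open>di_ops\<close>.\<close>

locale dot_graded_ops =
  fixes P :: "nat \<Rightarrow> bool"
    and ops ::
      "((('x + 'x) btree \<Rightarrow> 'k::field) \<Rightarrow> (('x + 'x) btree \<Rightarrow> 'k) \<Rightarrow> (('x + 'x) btree \<Rightarrow> 'k)) list"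
  assumes opL_in_ops: "opL \<in> set ops"
    and opR_in_ops: "opR \<in> set ops"
    and ops_cases: "p \<in> set ops \<Longrightarrow> p = opL \<or> p = opR \<or> p = mmul"
    and P_1: "P 1"
    and not_P_0: "\<not> P 0"
    and P_add: "mmul \<in> set ops \<Longrightarrow> P x \<Longrightarrow> P y \<Longrightarrow> P (x + y)"
    and P_add_D: "0 < x \<Longrightarrow> 0 < y \<Longrightarrow> P (x + y) \<Longrightarrow> mmul \<in> set ops \<and> P x \<and> P y"
begin

lemma ops_in_dot_span:
  assumes "p \<in> set ops" "f \<in> dot_span X P" "g \<in> dot_span X P"
  shows "p f g \<in> dot_span X P"
proof -
  have "mmul f g \<in> dot_span X P" if "p = mmul"
    using that assms P_add by (intro mmul_in_dot_span) simp_all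
  then show ?thesis
    using ops_cases[OF assms(1)] assms(2,3)
    by (auto intro: opL_in_dot_span opR_in_dot_span dot_span_Melt)
qed

lemma subalg_gen_dotgens_subset: "subalg_gen (dotgens X) ops \<subseteq> dot_span X P"
proof
  fix a assume "a \<in> subalg_gen (dotgens X) ops"
  then show "a \<in> dot_span X P"
  proof induction
    case (gen g)
    then show ?case
      using P_1 by (auto simp: dotgens_def monoms_def intro!: dot_span_mono)
  qed (simp_all add: dot_span_mzero dot_span_madd dot_span_msc ops_in_dot_span)
qed

lemma mono_dot_leftmost_in_subalg_gen:
  "t \<in> monoms X \<Longrightarrow> dot_deg t = 0 \<Longrightarrow> mono (dot_leftmost t) \<in> subalg_gen (dotgens X) ops"
proof (induction t)
  case (Leaf y)
  then obtain x where "y = Inl x" "x \<in> X"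
    by (cases y) (auto simp: monoms_def)
  then show ?case by (auto simp: dotgens_def intro: subalg_gen.gen)
next
  case (Node l r)
  have "mono (dot_leftmost (Node l r)) = opR (mono (dot_leftmost l)) (mono (dot_leftmost r))"
    using Node.prems by (simp add: opR_def phi_mono collapse_dot_leftmost mmul_mono)
  also have "\<dots> \<in> subalg_gen (dotgens X) ops"
    by (rule subalg_gen.op[OF opR_in_ops]) (use Node in simp_all)
  finally show ?case .
qed

lemma mono_in_subalg_gen:
  "t \<in> monoms X \<Longrightarrow> P (dot_deg t) \<Longrightarrow> mono t \<in> subalg_gen (dotgens X) ops"
proof (induction t)
  case (Leaf y)
  then obtain x where "y = Inr x" "x \<in> X"
    using not_P_0 by (cases y) (auto simp: monoms_def)
  then show ?case by (auto simp: dotgens_def intro: subalg_gen.gen)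
next
  case (Node l r)
  consider "dot_deg l = 0" | "dot_deg r = 0" | "0 < dot_deg l" "0 < dot_deg r"
    by blast
  then show ?case
  proof cases
    case 1
    then have "mono (Node l r) = opL (mono (dot_leftmost l)) (mono r)"
      by (simp add: opL_def phi_mono collapse_dot_leftmost mmul_mono)
    also have "\<dots> \<in> subalg_gen (dotgens X) ops"
    proof (rule subalg_gen.op[OF opL_in_ops])
      show "mono (dot_leftmost l) \<in> subalg_gen (dotgens X) ops"
        using Node.prems 1 by (simp add: mono_dot_leftmost_in_subalg_gen)
      show "mono r \<in> subalg_gen (dotgens X) ops"
        using Node 1 by simp
    qed
    finally show ?thesis .
  next
    case 2
    then have "mono (Node l r) = opR (mono l) (mono (dot_leftmost r))"
      by (simp add: opR_def phi_mono collapse_dot_leftmost mmul_mono)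
    also have "\<dots> \<in> subalg_gen (dotgens X) ops"
    proof (rule subalg_gen.op[OF opR_in_ops])
      show "mono l \<in> subalg_gen (dotgens X) ops"
        using Node 2 by simp
      show "mono (dot_leftmost r) \<in> subalg_gen (dotgens X) ops"
        using Node.prems 2 by (simp add: mono_dot_leftmost_in_subalg_gen)
    qed
    finally show ?thesis .
  next
    case 3
    have "P (dot_deg l + dot_deg r)"
      using Node.prems(2) by simp
    then have "mmul \<in> set ops" "P (dot_deg l)" "P (dot_deg r)"
      using P_add_D[OF 3] by simp_all
    then have "mmul (mono l) (mono r) \<in> subalg_gen (dotgens X) ops"
      using Node by (intro subalg_gen.op[of mmul]) simp_all
    then show ?thesis by (simp add: mmul_mono)
  qed
qed

lemma subalg_gen_dotgens_eq: "subalg_gen (dotgens X) ops = dot_span X P"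
proof
  show "dot_span X P \<subseteq> subalg_gen (dotgens X) ops"
  proof
    fix a :: "('x + 'x) btree \<Rightarrow> 'k" assume "a \<in> dot_span X P"
    then show "a \<in> subalg_gen (dotgens X) ops"
      by (induction rule: dot_span_induct) (simp_all add: mono_in_subalg_gen subalg_gen.intros)
  qed
qed (rule subalg_gen_dotgens_subset)

lemma dot_part_mmul:
  "dot_part P (mmul f g) = madd (madd (dot_part P (mmul (dot_part P f) (dot_part P g)))
     (mmul (dot_part P f) (plain_part g))) (mmul (plain_part f) (dot_part P g))"
proof
  fix t
  show "dot_part P (mmul f g) t = madd (madd (dot_part P (mmul (dot_part P f) (dot_part P g)))
     (mmul (dot_part P f) (plain_part g))) (mmul (plain_part f) (dot_part P g)) t"
  proof (cases t)
    case (Node l r)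
    consider "dot_deg l = 0" | "dot_deg r = 0" | "0 < dot_deg l" "0 < dot_deg r"
      by blast
    then show ?thesis
    proof cases
      case 3
      then have "P (dot_deg l + dot_deg r) \<Longrightarrow> P (dot_deg l) \<and> P (dot_deg r)"
        using P_add_D by blast
      then show ?thesis
        using Node 3 by (simp add: dot_part_apply m_apply)
    qed (use Node not_P_0 in \<open>simp_all add: dot_part_apply m_apply\<close>)
  qed (simp add: dot_part_apply m_apply)
qed

lemma dot_part_mmul_cases:
  assumes "f \<in> dot_span X P" "g \<in> dot_span X P"
  shows "mmul \<in> set ops \<and> dot_part P (mmul f g) = mmul f g \<or> dot_part P (mmul f g) = mzero"
proof (cases "mmul \<in> set ops")
  case True
  then have "mmul f g \<in> dot_span X P"
    using assms P_add by (intro mmul_in_dot_span) simp_all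
  then show ?thesis using True by (simp add: dot_part_id)
next
  case False
  have "dot_part P (mmul f g) t = 0" for t
  proof (cases t)
    case (Node l r)
    show ?thesis
    proof (cases "f l = 0 \<or> g r = 0")
      case False
      then have "P (dot_deg l)" "P (dot_deg r)"
        using assms by (auto simp: dot_span_def supp_def)
      then have "0 < dot_deg l" "0 < dot_deg r"
        using not_P_0 by (metis gr0I)+
      then have "\<not> P (dot_deg l + dot_deg r)"
        using P_add_D \<open>mmul \<notin> set ops\<close> by blast
      then show ?thesis using Node by (simp add: dot_part_apply)
    qed (use Node in \<open>auto simp: dot_part_apply\<close>)
  qed (simp add: dot_part_apply)
  then show ?thesis by (simp add: mzero_def fun_eq_iff)
qed

lemma plain_part_in_phi_image: "Melt X m \<Longrightarrow> plain_part m \<in> phi ` dot_span X P"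
  using plain_in_phi_image[OF dot_part_in_dot_span] dot_span_subset[of "\<lambda>d. d = 1" P X] P_1
  by blast

context
  fixes X :: "'x set" and G :: "(('x + 'x) btree \<Rightarrow> 'k) set"
  assumes G_subset: "G \<subseteq> dot_span X P"
begin

abbreviation JG :: "(('x + 'x) btree \<Rightarrow> 'k) set" where
  "JG \<equiv> relideal_gen (dot_span X P) G ops"

lemma JG_subset_dot_span: "JG \<subseteq> dot_span X P"
proof
  fix a assume "a \<in> JG"
  then show "a \<in> dot_span X P"
  proof induction
    case (gen g)
    then show ?case using G_subset by blast
  qed (simp_all add: dot_span_mzero dot_span_madd dot_span_msc ops_in_dot_span)
qed

lemma dot_part_mmul_right_in_JG:
  assumes "a \<in> JG" "w \<in> dot_span X P"
  shows "dot_part P (mmul a w) \<in> JG"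
proof -
  have "a \<in> dot_span X P"
    using assms(1) JG_subset_dot_span by blast
  then consider "mmul \<in> set ops" "dot_part P (mmul a w) = mmul a w"
    | "dot_part P (mmul a w) = mzero"
    using dot_part_mmul_cases assms(2) by blast
  then show ?thesis
    using assms by cases (simp_all add: relideal_gen.opr[of mmul] relideal_gen.zero)
qed

lemma dot_part_mmul_left_in_JG:
  assumes "a \<in> JG" "w \<in> dot_span X P"
  shows "dot_part P (mmul w a) \<in> JG"
proof -
  have "a \<in> dot_span X P"
    using assms(1) JG_subset_dot_span by blast
  then consider "mmul \<in> set ops" "dot_part P (mmul w a) = mmul w a"
    | "dot_part P (mmul w a) = mzero"
    using dot_part_mmul_cases assms(2) by blast
  then show ?thesis
    using assms by cases (simp_all add: relideal_gen.opl[of mmul] relideal_gen.zero)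
qed

lemma parts_in_mzero: "parts_in P JG mzero"
  by (simp add: parts_in_def dot_part_mzero relideal_gen.zero mzero_in_phi_image)

lemma parts_in_madd: "parts_in P JG a \<Longrightarrow> parts_in P JG b \<Longrightarrow> parts_in P JG (madd a b)"
  by (auto simp: parts_in_def dot_part_madd phi_madd[symmetric] intro: relideal_gen.add)

lemma parts_in_msc: "parts_in P JG a \<Longrightarrow> parts_in P JG (msc c a)"
  by (auto simp: parts_in_def dot_part_msc phi_msc[symmetric] intro: relideal_gen.smult)

text \<open>The plain parts of the factors are images under \<open>phi\<close>, so the cross terms of a product
  are values of \<open>\<turnstile>\<close> and \<open>\<stileturn>\<close>, while its plain part is \<open>phi\<close> of a value of \<open>\<stileturn>\<close>.\<close>

lemma parts_in_mmul_right:
  assumes "parts_in P JG a" "Melt X m"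
  shows "parts_in P JG (mmul a m)"
proof -
  obtain b where b: "b \<in> JG" "plain_part a = phi b"
    using assms(1) by (auto simp: parts_in_def)
  obtain d where d: "d \<in> dot_span X P" "plain_part m = phi d"
    using plain_part_in_phi_image[OF assms(2)] by blast
  have a: "dot_part P a \<in> JG" and m: "dot_part P m \<in> dot_span X P"
    using assms by (simp_all add: parts_in_def dot_part_in_dot_span)
  have "mmul (dot_part P a) (plain_part m) = opR (dot_part P a) d"
    by (simp add: opR_def d)
  then have "mmul (dot_part P a) (plain_part m) \<in> JG"
    using relideal_gen.opr[OF opR_in_ops a d(1)] by simp
  moreover have "mmul (plain_part a) (dot_part P m) = opL b (dot_part P m)"
    by (simp add: opL_def b)
  then have "mmul (plain_part a) (dot_part P m) \<in> JG"
    using relideal_gen.opr[OF opL_in_ops b(1) m] by simp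
  ultimately have "dot_part P (mmul a m) \<in> JG"
    unfolding dot_part_mmul[of a m]
    by (intro relideal_gen.add dot_part_mmul_right_in_JG a m)
  moreover have "plain_part (mmul a m) = phi (opR b d)"
    by (simp add: plain_part_mmul b d opR_def phi_mmul phi_phi)
  moreover have "opR b d \<in> JG"
    using relideal_gen.opr[OF opR_in_ops b(1) d(1)] .
  ultimately show ?thesis by (auto simp: parts_in_def)
qed

lemma parts_in_mmul_left:
  assumes "parts_in P JG a" "Melt X m"
  shows "parts_in P JG (mmul m a)"
proof -
  obtain b where b: "b \<in> JG" "plain_part a = phi b"
    using assms(1) by (auto simp: parts_in_def)
  obtain d where d: "d \<in> dot_span X P" "plain_part m = phi d"
    using plain_part_in_phi_image[OF assms(2)] by blast
  have a: "dot_part P a \<in> JG" and m: "dot_part P m \<in> dot_span X P"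
    using assms by (simp_all add: parts_in_def dot_part_in_dot_span)
  have "mmul (dot_part P m) (plain_part a) = opR (dot_part P m) b"
    by (simp add: opR_def b)
  then have "mmul (dot_part P m) (plain_part a) \<in> JG"
    using relideal_gen.opl[OF opR_in_ops b(1) m] by simp
  moreover have "mmul (plain_part m) (dot_part P a) = opL d (dot_part P a)"
    by (simp add: opL_def d)
  then have "mmul (plain_part m) (dot_part P a) \<in> JG"
    using relideal_gen.opl[OF opL_in_ops a d(1)] by simp
  ultimately have "dot_part P (mmul m a) \<in> JG"
    unfolding dot_part_mmul[of m a]
    by (intro relideal_gen.add dot_part_mmul_left_in_JG a m)
  moreover have "plain_part (mmul m a) = phi (opL d b)"
    by (simp add: plain_part_mmul b d opL_def phi_mmul phi_phi)
  moreover have "opL d b \<in> JG"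
    using relideal_gen.opl[OF opL_in_ops b(1) d(1)] .
  ultimately show ?thesis by (auto simp: parts_in_def)
qed

lemma parts_in_ideal_gen:
  assumes "\<And>g. g \<in> H \<Longrightarrow> parts_in P JG g" "a \<in> ideal_gen X H"
  shows "parts_in P JG a"
  using assms(2)
proof induction
  case (gen g)
  then show ?case by (rule assms(1))
qed (simp_all add: parts_in_mzero parts_in_madd parts_in_msc parts_in_mmul_right parts_in_mmul_left)

lemma parts_in_gen:
  assumes "g \<in> G"
  shows "parts_in P JG g"
proof -
  have g: "g \<in> dot_span X P" using assms G_subset by blast
  have "plain_part g = mzero"
    by (rule dot_part_eq_mzero[OF g]) (metis not_P_0)
  then show ?thesis
    using assms g
    by (simp add: parts_in_def dot_part_id relideal_gen.gen relideal_gen.zero mzero_in_phi_image)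
qed

lemma parts_in_phi_gen: "g \<in> G \<Longrightarrow> parts_in P JG (phi g)"
  using not_P_0
  by (auto simp: parts_in_def dot_part_phi plain_part_phi relideal_gen.zero relideal_gen.gen)

lemma parts_in_eval_poly_mono:
  assumes fin: "finite {t. \<Phi> t \<noteq> 0}"
    and pl: "\<And>t. \<Phi> t \<noteq> 0 \<Longrightarrow> distinct (leaves t) \<and> set (leaves t) = {1..n}" and "1 \<le> n"
    and values_in_JG: "\<And>v. (\<And>i. Melt X (v i)) \<Longrightarrow> eval_poly \<Phi> v \<in> dot_span X P \<Longrightarrow> eval_poly \<Phi> v \<in> JG"
    and \<tau>: "\<And>i. \<tau> i \<in> monoms X"
  shows "parts_in P JG (eval_poly \<Phi> (\<lambda>i. mono (\<tau> i)))"
proof -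
  define g where "g = eval_poly \<Phi> (\<lambda>i. mono (\<tau> i))"
  define N where "N = (\<Sum>i = 1..n. dot_deg (\<tau> i))"
  have g: "g \<in> dot_span X (\<lambda>d. d = N)"
    unfolding g_def N_def using eval_poly_mono_in_dot_span[OF fin pl] \<tau> by blast
  consider "P N" | "\<not> P N" "N \<noteq> 0" | "N = 0"
    by blast
  then have "parts_in P JG g"
  proof cases
    case 1
    then have "g \<in> dot_span X P"
      using g dot_span_subset[of "\<lambda>d. d = N" P X] by blast
    then have "dot_part P g \<in> JG"
      using values_in_JG \<tau> by (simp add: g_def dot_part_id Melt_mono)
    moreover have "plain_part g = mzero"
      by (rule dot_part_eq_mzero[OF g]) (metis 1 not_P_0)
    ultimately show ?thesis
      by (simp add: parts_in_def relideal_gen.zero mzero_in_phi_image)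
  next
    case 2
    have "dot_part P g = mzero" "plain_part g = mzero"
      using 2 by (auto intro: dot_part_eq_mzero[OF g])
    then show ?thesis
      by (simp add: parts_in_def relideal_gen.zero mzero_in_phi_image)
  next
    case 3
    let ?\<tau>' = "\<tau>(1 := dot_leftmost (\<tau> 1))"
    have plain: "dot_deg (\<tau> i) = 0" if "i \<in> {1..n}" for i
      using 3 that by (simp add: N_def)
    txt \<open>The plain value \<open>g\<close> is \<open>phi\<close> of the value at a substitution of dot degree \<open>1\<close>,
      which lies in \<open>V\<close>, hence in \<open>JG\<close>.\<close>
    have "eval_poly \<Phi> (\<lambda>i. mono (?\<tau>' i)) \<in> dot_span X (\<lambda>d. d = 1)"
      by (rule eval_poly_dot_leftmost_in_dot_span[OF fin]) (use pl \<open>1 \<le> n\<close> \<tau> plain in blast)+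
    then have "eval_poly \<Phi> (\<lambda>i. mono (?\<tau>' i)) \<in> JG"
      using values_in_JG dot_span_subset[of "\<lambda>d. d = 1" P X] P_1 \<tau>
      by (auto simp: Melt_mono dot_leftmost_in_monoms)
    moreover have "phi (eval_poly \<Phi> (\<lambda>i. mono (?\<tau>' i))) = g"
      unfolding g_def by (rule phi_eval_poly_dot_leftmost[OF fin]) (use pl plain in blast)+
    ultimately have "g \<in> phi ` JG"
      by (metis image_eqI)
    moreover have "plain_part g = g"
      using g 3 by (simp add: dot_part_id)
    moreover have "dot_part P g = mzero"
      by (rule dot_part_eq_mzero[OF g]) (use 3 not_P_0 in simp)
    ultimately show ?thesis
      by (simp add: parts_in_def relideal_gen.zero)
  qed
  then show ?thesis by (simp add: g_def)
qed

lemma parts_in_eval_poly: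
  assumes "polylinear \<Phi>"
    and values_in_JG: "\<And>v. (\<And>i. Melt X (v i)) \<Longrightarrow> eval_poly \<Phi> v \<in> dot_span X P \<Longrightarrow> eval_poly \<Phi> v \<in> JG"
    and u: "\<And>i. Melt X (u i)"
  shows "parts_in P JG (eval_poly \<Phi> u)"
proof -
  obtain n where fin: "finite {t. \<Phi> t \<noteq> 0}"
    and pl: "\<And>t. \<Phi> t \<noteq> 0 \<Longrightarrow> distinct (leaves t) \<and> set (leaves t) = {1..n}"
    using assms(1) unfolding polylinear_def by blast
  show ?thesis
  proof (cases "n = 0")
    case True
    then have "eval_poly \<Phi> u = mzero"
      using pl by (intro eval_poly_degree_0) simp
    then show ?thesis by (simp add: parts_in_mzero)
  next
    case False
    then have "1 \<le> n" by simp
    from pl this u show ?thesis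
      by (rule eval_poly_induct_monomials)
        (simp_all add: parts_in_eval_poly_mono[OF fin pl \<open>1 \<le> n\<close> values_in_JG]
          parts_in_mzero parts_in_madd parts_in_msc)
  qed
qed

lemma parts_in_ideal_gen_Tideal:
  assumes "\<forall>\<Phi> \<in> Ids. polylinear \<Phi>" "S \<subseteq> G" "dot_span X P \<inter> Tideal X Ids \<subseteq> G"
    and "a \<in> ideal_gen X (Tideal X Ids \<union> S \<union> phi ` S)"
  shows "parts_in P JG a"
proof (rule parts_in_ideal_gen[OF _ assms(4)])
  fix g assume "g \<in> Tideal X Ids \<union> S \<union> phi ` S"
  then consider "g \<in> Tideal X Ids" | "g \<in> S" | "g \<in> phi ` S"
    by blast
  then show "parts_in P JG g"
  proof cases
    case 1
    then show ?thesis
      unfolding Tideal_def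
    proof (rule parts_in_ideal_gen[rotated])
      fix h assume "h \<in> {eval_poly \<Phi> u | \<Phi> u. \<Phi> \<in> Ids \<and> (\<forall>i. Melt X (u i))}"
      then obtain \<Phi> u where h: "h = eval_poly \<Phi> u" "\<Phi> \<in> Ids" "\<forall>i. Melt X (u i)"
        by blast
      have "eval_poly \<Phi> v \<in> JG" if "\<And>i. Melt X (v i)" "eval_poly \<Phi> v \<in> dot_span X P" for v
      proof (rule relideal_gen.gen)
        have "eval_poly \<Phi> v \<in> Tideal X Ids"
          unfolding Tideal_def using h(2) that(1) by (blast intro: ideal_gen.gen)
        then show "eval_poly \<Phi> v \<in> G"
          using that(2) assms(3) by blast
      qed
      then show "parts_in P JG h"
        using h assms(1) by (simp add: parts_in_eval_poly)
    qed
  next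
    case 2
    then show ?thesis using assms(2) parts_in_gen by blast
  next
    case 3
    then show ?thesis using assms(2) parts_in_phi_gen by blast
  qed
qed

end

lemma relideal_gen_subset_ideal_gen:
  assumes "G \<subseteq> ideal_gen X H" "\<And>m. m \<in> ideal_gen X H \<Longrightarrow> phi m \<in> ideal_gen X H"
    and "\<And>w. w \<in> W \<Longrightarrow> Melt X w"
  shows "relideal_gen W G ops \<subseteq> ideal_gen X H"
proof
  fix a assume "a \<in> relideal_gen W G ops"
  then show "a \<in> ideal_gen X H"
  proof induction
    case (gen g)
    then show ?case using assms(1) by blast
  next
    case (opr p a w)
    have "phi a \<in> ideal_gen X H" "Melt X w" "Melt X (phi w)"
      using opr assms(2,3) Melt_phi by blast+
    then show ?case
      using ops_cases[OF opr.hyps(1)] opr.IH by (auto simp: opL_def opR_def intro: ideal_gen.mulr)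
  next
    case (opl p a w)
    have "phi a \<in> ideal_gen X H" "Melt X w" "Melt X (phi w)"
      using opl assms(2,3) Melt_phi by blast+
    then show ?case
      using ops_cases[OF opl.hyps(1)] opl.IH by (auto simp: opL_def opR_def intro: ideal_gen.mull)
  qed (simp_all add: ideal_gen.intros)
qed

theorem replicated_quotient_iso:
  assumes pl: "\<forall>\<Phi> \<in> Ids. polylinear \<Phi>" and S: "S \<subseteq> dot_span X P"
  defines "I \<equiv> ideal_gen X (Tideal X Ids \<union> S \<union> phi ` S)"
    and "J \<equiv> relideal_gen (dot_span X P) (S \<union> (dot_span X P \<inter> Tideal X Ids)) ops"
  shows "(\<forall>m \<in> I. phi m \<in> I)
    \<and> quot_iso (dot_span X P) J ops
        (subalg_gen (dotgens X) ops) (subalg_gen (dotgens X) ops \<inter> I) ops"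
proof -
  have G: "S \<union> (dot_span X P \<inter> Tideal X Ids) \<subseteq> dot_span X P"
    using S by blast
  have phi_I: "\<And>m. m \<in> I \<Longrightarrow> phi m \<in> I"
    unfolding I_def using phi_ideal_gen_Tideal[OF pl] by blast
  have gens_I: "Tideal X Ids \<union> S \<union> phi ` S \<subseteq> I"
    unfolding I_def by (blast intro: ideal_gen.gen)
  have "J \<subseteq> I"
    unfolding J_def I_def
    by (rule relideal_gen_subset_ideal_gen) (use gens_I phi_I dot_span_Melt in \<open>auto simp: I_def\<close>)
  moreover have "a \<in> J" if "a \<in> dot_span X P" "a \<in> I" for a
  proof -
    have "parts_in P J a"
      unfolding J_def
      by (rule parts_in_ideal_gen_Tideal[OF G pl]) (use that(2) in \<open>auto simp: I_def\<close>)
    then show ?thesis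
      using that(1) by (simp add: parts_in_def dot_part_id)
  qed
  moreover have "J \<subseteq> dot_span X P"
    unfolding J_def using JG_subset_dot_span[OF G] .
  ultimately have "quot_iso (dot_span X P) J ops (dot_span X P) (dot_span X P \<inter> I) ops"
    by (intro quot_iso_identity) (auto simp: I_def dot_span_mzero ideal_gen.zero)
  then show ?thesis
    using phi_I by (simp add: subalg_gen_dotgens_eq)
qed

end

interpretation tri: dot_graded_ops "\<lambda>d. 1 \<le> d" tri_ops
  by unfold_locales (auto simp: tri_ops_def)

interpretation di: dot_graded_ops "\<lambda>d. d = 1" di_ops
  by unfold_locales (auto simp: di_ops_def mmul_neq_opL mmul_neq_opR)

theorem corollary4p3:
  fixes X :: "'x set" and Ids :: "(nat btree \<Rightarrow> 'k::field) set"
  assumes "\<forall>\<Phi>\<in>Ids. polylinear \<Phi>"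
  shows
    "(\<forall>S. S \<subseteq> VM X \<longrightarrow>
        (let T = Tideal X Ids;
             I = ideal_gen X (T \<union> S \<union> phi ` S);
             A = subalg_gen (dotgens X) tri_ops;
             J = relideal_gen (VM X) (S \<union> (VM X \<inter> T)) tri_ops
         in (\<forall>m\<in>I. phi m \<in> I) \<and> quot_iso (VM X) J tri_ops A (A \<inter> I) tri_ops))
   \<and> (\<forall>S. S \<subseteq> V2M X \<longrightarrow>
        (let T = Tideal X Ids;
             I = ideal_gen X (T \<union> S \<union> phi ` S);
             A = subalg_gen (dotgens X) di_ops;
             J = relideal_gen (V2M X) (S \<union> (V2M X \<inter> T)) di_ops
         in (\<forall>m\<in>I. phi m \<in> I) \<and> quot_iso (V2M X) J di_ops A (A \<inter> I) di_ops))"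
  using tri.replicated_quotient_iso[OF assms] di.replicated_quotient_iso[OF assms]
  unfolding Let_def VM_eq_dot_span V2M_eq_dot_span by blast

end
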